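(* \[ \sum_{n=1}^{\infty}\frac{ne^{n\pi}}{e^{2\pi n}-1}+\sum_{n=1}^{\infty}\frac{n(-1)^n}{e^{2\pi n}-1}=\frac{1}{8}-\frac{1}{4\pi}. \] *)

theory Defs
  imports Complex_Main
begin

end

theory Submission
  imports Defs "HOL-Analysis.Analysis" "HOL-Real_Asymp.Real_Asymp"
begin

(* Let L(t) = \<Sum>n\<ge>1 n / (exp (2 pi n t) - 1) and K(t) = \<Sum>m\<ge>1 1 / sinh (pi m t)^2.
   Since n exp (pi n) / (exp (2 pi n) - 1) = n / (exp (pi n) - 1) - n / (exp (2 pi n) - 1), and the
   alternating sign only doubles the even terms, the left-hand side equals
   L(1/2) + 4 L(2) - 2 L(1).  Lambert's identity \<Sum> n q^n / (1 - q^n) = \<Sum> q^m / (1 - q^m)^2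
   turns L(t) into K(t)/4.  Finally K satisfies the transformation law of the Eisenstein series E2,
     K(t) + K(1/t) / t^2 = 1/6 + 1/(6 t^2) - 1/(pi t),
   obtained by summing the absolutely convergent double series \<Sum>m,n\<ge>0 Re (1 / (w^2 (w + 1))),
   w = n + i m t, first by rows and then by columns, where the rows and columns are evaluated by the
   partial fraction expansions of pi coth and pi^2 / sinh^2 (from the reflection formulas for the
   digamma and trigamma functions).  The cases t = 1 and t = 2 give K(1) and K(2) + K(1/2)/4. *)

section \<open>Partial fractions of cot and 1 / sin^2\<close>

lemma not_Ints_nonpoles:
  fixes z :: complex
  assumes "z \<notin> \<int>"
  shows "z \<notin> \<int>\<^sub>\<le>\<^sub>0" "1 - z \<notin> \<int>\<^sub>\<le>\<^sub>0" "sin (of_real pi * z) \<noteq> 0"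
proof -
  show "z \<notin> \<int>\<^sub>\<le>\<^sub>0" using assms nonpos_Ints_subset_Ints by blast
  have "1 - z \<notin> \<int>"
    using assms Ints_diff[of 1 "1 - z"] by auto
  then show "1 - z \<notin> \<int>\<^sub>\<le>\<^sub>0" using nonpos_Ints_subset_Ints by blast
  show "sin (of_real pi * z) \<noteq> 0" using assms by (auto simp: sin_eq_0 Ints_def)
qed

lemma Digamma_reflection_complex:
  fixes z :: complex
  assumes "z \<notin> \<int>"
  shows "Digamma z - Digamma (1 - z) = - of_real pi * cot (of_real pi * z)"
proof -
  note nonpole = not_Ints_nonpoles[OF assms]
  have "((\<lambda>w. Gamma w * Gamma (1 - w)) has_field_derivative
       Gamma z * Digamma z * Gamma (1 - z) + Gamma z * (Gamma (1 - z) * Digamma (1 - z) * (-1))) (at z)"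
    using nonpole by (auto intro!: derivative_eq_intros)
  moreover have "((\<lambda>w. of_real pi / sin (of_real pi * w)) has_field_derivative
       - (of_real pi * (cos (of_real pi * z) * of_real pi)) / sin (of_real pi * z) ^ 2) (at z)"
    using nonpole by (auto intro!: derivative_eq_intros simp: power2_eq_square)
  ultimately have "Gamma z * Digamma z * Gamma (1 - z) + Gamma z * (Gamma (1 - z) * Digamma (1 - z) * (-1))
      = - (of_real pi * (cos (of_real pi * z) * of_real pi)) / sin (of_real pi * z) ^ 2"
    unfolding Gamma_reflection_complex by (rule DERIV_unique)
  then have "Gamma z * Gamma (1 - z) * (Digamma z - Digamma (1 - z))
      = of_real pi / sin (of_real pi * z) * (- of_real pi * cot (of_real pi * z))"
    by (simp add: cot_def field_simps power2_eq_square)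
  moreover have "Gamma z * Gamma (1 - z) \<noteq> 0"
    using nonpole by (auto simp: Gamma_eq_zero_iff)
  ultimately show ?thesis
    by (metis Gamma_reflection_complex mult_left_cancel)
qed

lemma Polygamma_1_reflection_complex:
  fixes z :: complex
  assumes "z \<notin> \<int>"
  shows "Polygamma 1 z + Polygamma 1 (1 - z) = of_real pi ^ 2 / sin (of_real pi * z) ^ 2"
proof -
  note nonpole = not_Ints_nonpoles[OF assms]
  have "((\<lambda>w. Digamma w - Digamma (1 - w)) has_field_derivative
          Polygamma 1 z - Polygamma 1 (1 - z) * (-1)) (at z)"
    using nonpole by (auto intro!: derivative_eq_intros)
  then have "((\<lambda>w. - of_real pi * cot (of_real pi * w)) has_field_derivative
          Polygamma 1 z - Polygamma 1 (1 - z) * (-1)) (at z)"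
    by (rule has_field_derivative_transform_within_open[where S = "- \<int>"])
       (use assms in \<open>auto simp: Digamma_reflection_complex\<close>)
  moreover have "((\<lambda>w. - of_real pi * cot (of_real pi * w)) has_field_derivative
          of_real pi ^ 2 / sin (of_real pi * z) ^ 2) (at z)"
    unfolding cot_def using nonpole(3) sin_cos_squared_add[of "of_real pi * z"]
    by (auto intro!: derivative_eq_intros simp: power2_eq_square divide_simps) algebra
  ultimately show ?thesis by (simp add: DERIV_unique)
qed

lemma cot_partial_fractions:
  fixes z :: complex
  assumes "z \<notin> \<int>"
  shows "(\<lambda>k. inverse (z + of_nat k) - inverse (1 - z + of_nat k))
           sums (of_real pi * cot (of_real pi * z))"
proof -
  have "z \<noteq> 0" "1 - z \<noteq> 0"
    using assms Ints_0 Ints_1 by force+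
  then have "(\<lambda>k. inverse (of_nat (Suc k)) - inverse (z + of_nat k)) sums (Digamma z + euler_mascheroni)"
       and "(\<lambda>k. inverse (of_nat (Suc k)) - inverse (1 - z + of_nat k)) sums (Digamma (1 - z) + euler_mascheroni)"
    using summable_Digamma[of z] summable_Digamma[of "1 - z"]
    by (simp_all add: Digamma_def summable_sums)
  moreover have "Digamma (1 - z) - Digamma z = of_real pi * cot (of_real pi * z)"
    using Digamma_reflection_complex[OF assms] by (simp add: algebra_simps)
  ultimately show ?thesis
    using sums_diff by fastforce
qed

lemma sin_sq_partial_fractions:
  fixes z :: complex
  assumes "z \<notin> \<int>"
  shows "(\<lambda>k. inverse ((z + of_nat k)\<^sup>2) + inverse ((1 - z + of_nat k)\<^sup>2))
           sums (of_real pi ^ 2 / sin (of_real pi * z) ^ 2)"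
proof -
  have "z \<noteq> 0" "1 - z \<noteq> 0"
    using assms Ints_0 Ints_1 by force+
  then have "(\<lambda>k. inverse ((z + of_nat k)\<^sup>2)) sums Polygamma 1 z"
       and "(\<lambda>k. inverse ((1 - z + of_nat k)\<^sup>2)) sums Polygamma 1 (1 - z)"
    using Polygamma_LIMSEQ[of z 1] Polygamma_LIMSEQ[of "1 - z" 1]
    by (simp_all add: power2_eq_square)
  from sums_add[OF this] show ?thesis
    using Polygamma_1_reflection_complex[OF assms] by simp
qed

lemma sin_ii_times_of_real: "sin (\<i> * of_real x) = \<i> * of_real (sinh x)"
  by (simp add: sin_i_times sinh_field_def exp_of_real exp_minus)

lemma cos_ii_times_of_real: "cos (\<i> * of_real x) = of_real (cosh x)"
  by (simp add: cos_i_times cosh_field_def exp_of_real exp_minus)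

section \<open>Series along the imaginary axis\<close>

definition re_inv :: "real \<Rightarrow> real \<Rightarrow> real" where
  "re_inv x y = x / (x\<^sup>2 + y\<^sup>2)"

definition re_inv_sq :: "real \<Rightarrow> real \<Rightarrow> real" where
  "re_inv_sq x y = (x\<^sup>2 - y\<^sup>2) / (x\<^sup>2 + y\<^sup>2)\<^sup>2"

lemma Re_inverse_Complex: "Re (inverse (Complex x y)) = re_inv x y"
  by (simp add: re_inv_def power2_eq_square)

lemma Re_inverse_Complex_sq: "Re (inverse ((Complex x y)\<^sup>2)) = re_inv_sq x y"
proof -
  have "(Complex x y)\<^sup>2 = Complex (x\<^sup>2 - y\<^sup>2) (2 * x * y)"
    by (simp add: complex_eq_iff power2_eq_square)
  moreover have "(x\<^sup>2 - y\<^sup>2)\<^sup>2 + (2 * x * y)\<^sup>2 = (x\<^sup>2 + y\<^sup>2)\<^sup>2"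
    by (simp add: power2_eq_square algebra_simps)
  ultimately show ?thesis by (simp add: re_inv_sq_def)
qed

lemma re_inv_sq_minus_right: "re_inv_sq x (- y) = re_inv_sq x y"
  by (simp add: re_inv_sq_def)

lemma re_inv_sq_swap: "re_inv_sq y x = - re_inv_sq x y"
  by (simp add: re_inv_sq_def add.commute minus_divide_left)

lemma re_inv_scale: "re_inv (c * x) (c * y) = re_inv x y / c"
proof (cases "c = 0 \<or> x\<^sup>2 + y\<^sup>2 = 0")
  case False
  have "(c * x)\<^sup>2 + (c * y)\<^sup>2 = c\<^sup>2 * (x\<^sup>2 + y\<^sup>2)" by (simp add: power_mult_distrib algebra_simps)
  with False show ?thesis by (simp add: re_inv_def power2_eq_square)
qed (auto simp: re_inv_def)

lemma re_inv_sq_scale: "re_inv_sq (c * x) (c * y) = re_inv_sq x y / c\<^sup>2"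
proof -
  have "(c * x)\<^sup>2 + (c * y)\<^sup>2 = c\<^sup>2 * (x\<^sup>2 + y\<^sup>2)" "(c * x)\<^sup>2 - (c * y)\<^sup>2 = c\<^sup>2 * (x\<^sup>2 - y\<^sup>2)"
    by (simp_all add: power_mult_distrib algebra_simps)
  moreover have "c\<^sup>2 * D / (c\<^sup>2 * X)\<^sup>2 = D / X\<^sup>2 / c\<^sup>2" for D X :: real
    by (cases "c = 0 \<or> X = 0") (auto simp: power_mult_distrib power2_eq_square)
  ultimately show ?thesis by (simp add: re_inv_sq_def)
qed

lemma coth_partial_fractions:
  fixes a :: real
  assumes "a > 0"
  shows "(\<lambda>k. re_inv a (real k) + re_inv a (real (Suc k))) sums (pi * cosh (pi * a) / sinh (pi * a))"
proof -
  define z where "z = \<i> * of_real a"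
  have "z \<notin> \<int>" using assms by (simp add: z_def complex_is_Int_iff)
  note sums_Im[OF cot_partial_fractions[OF this]]
  moreover have "Im (inverse (z + of_nat k) - inverse (1 - z + of_nat k))
      = - (re_inv a (real k) + re_inv a (real (Suc k)))" for k
  proof -
    have "z + of_nat k = Complex (real k) a" "1 - z + of_nat k = Complex (real (Suc k)) (- a)"
      by (simp_all add: z_def complex_eq_iff)
    then show ?thesis by (simp add: re_inv_def add.commute)
  qed
  moreover have "Im (of_real pi * cot (of_real pi * z)) = - (pi * cosh (pi * a) / sinh (pi * a))"
  proof -
    have "sin (of_real pi * z) = \<i> * of_real (sinh (pi * a))"
         "cos (of_real pi * z) = of_real (cosh (pi * a))"
      using sin_ii_times_of_real[of "pi * a"] cos_ii_times_of_real[of "pi * a"]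
      by (simp_all add: z_def mult.left_commute)
    moreover have "sinh (pi * a) \<noteq> 0" using assms by simp
    ultimately show ?thesis by (simp add: cot_def Im_divide power2_eq_square)
  qed
  ultimately have "(\<lambda>k. - (re_inv a (real k) + re_inv a (real (Suc k))))
      sums (- (pi * cosh (pi * a) / sinh (pi * a)))"
    by simp
  from sums_minus[OF this] show ?thesis by (simp add: add_ac)
qed

lemma csch_sq_partial_fractions:
  fixes a :: real
  assumes "a > 0"
  shows "(\<lambda>k. re_inv_sq (real k) a + re_inv_sq (real (Suc k)) a) sums (- (pi\<^sup>2 / (sinh (pi * a))\<^sup>2))"
proof -
  define z where "z = \<i> * of_real a"
  have "z \<notin> \<int>" using assms by (simp add: z_def complex_is_Int_iff)
  note sums_Re[OF sin_sq_partial_fractions[OF this]]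
  moreover have "Re (inverse ((z + of_nat k)\<^sup>2) + inverse ((1 - z + of_nat k)\<^sup>2))
      = re_inv_sq (real k) a + re_inv_sq (real (Suc k)) a" for k
  proof -
    have "z + of_nat k = Complex (real k) a" "1 - z + of_nat k = Complex (real (Suc k)) (- a)"
      by (simp_all add: z_def complex_eq_iff)
    then show ?thesis by (simp only: Re_inverse_Complex_sq re_inv_sq_minus_right plus_complex.sel)
  qed
  moreover have "Re (of_real pi ^ 2 / sin (of_real pi * z) ^ 2) = - (pi\<^sup>2 / (sinh (pi * a))\<^sup>2)"
  proof -
    have "sin (of_real pi * z) = \<i> * of_real (sinh (pi * a))"
      using sin_ii_times_of_real[of "pi * a"] by (simp add: z_def mult.left_commute)
    then show ?thesis by (simp add: power_mult_distrib flip: of_real_power)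
  qed
  ultimately show ?thesis by simp
qed

lemma abs_re_inv_le: "y \<noteq> 0 \<Longrightarrow> \<bar>re_inv x y\<bar> \<le> \<bar>x\<bar> / y\<^sup>2"
  unfolding re_inv_def abs_divide by (auto intro!: divide_left_mono mult_pos_pos add_nonneg_pos)

lemma abs_re_inv_sq_le: "\<bar>re_inv_sq x y\<bar> \<le> 1 / (x\<^sup>2 + y\<^sup>2)"
proof (cases "x\<^sup>2 + y\<^sup>2 = 0")
  case False
  then have "\<bar>x\<^sup>2 - y\<^sup>2\<bar> / (x\<^sup>2 + y\<^sup>2)\<^sup>2 \<le> (x\<^sup>2 + y\<^sup>2) / (x\<^sup>2 + y\<^sup>2)\<^sup>2"
    by (intro divide_right_mono) (auto simp: abs_le_iff)
  with False show ?thesis by (simp add: re_inv_sq_def abs_divide power2_eq_square)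
qed (simp add: re_inv_sq_def)

lemma summable_abs_of_le_inverse_sq:
  fixes c :: real
  assumes "\<And>k. k \<ge> 1 \<Longrightarrow> \<bar>f k\<bar> \<le> c / (real k)\<^sup>2"
  shows "summable (\<lambda>k. \<bar>f k\<bar>)"
proof (rule summable_comparison_test'[where N = 1])
  show "summable (\<lambda>k. c * inverse (real k ^ 2))"
    by (intro summable_mult inverse_power_summable) simp
  fix k :: nat
  assume "k \<ge> 1"
  then show "norm \<bar>f k\<bar> \<le> c * inverse (real k ^ 2)"
    using assms by (simp add: divide_inverse)
qed

lemma summable_abs_re_inv: "summable (\<lambda>k. \<bar>re_inv a (real k)\<bar>)"
  by (rule summable_abs_of_le_inverse_sq[where c = "\<bar>a\<bar>"]) (simp add: abs_re_inv_le)

lemma summable_abs_re_inv_sq: "summable (\<lambda>k. \<bar>re_inv_sq (real k) y\<bar>)"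
proof (rule summable_abs_of_le_inverse_sq[where c = 1])
  fix k :: nat
  assume "k \<ge> 1"
  have "\<bar>re_inv_sq (real k) y\<bar> \<le> 1 / ((real k)\<^sup>2 + y\<^sup>2)" by (rule abs_re_inv_sq_le)
  also have "\<dots> \<le> 1 / (real k)\<^sup>2"
    using \<open>k \<ge> 1\<close> by (intro divide_left_mono mult_pos_pos) (auto simp: add_pos_nonneg)
  finally show "\<bar>re_inv_sq (real k) y\<bar> \<le> 1 / (real k)\<^sup>2" .
qed

definition re_inv_series :: "real \<Rightarrow> real" where
  "re_inv_series a = (\<Sum>k. re_inv a (real k))"

definition re_inv_sq_series :: "real \<Rightarrow> real" where
  "re_inv_sq_series y = (\<Sum>k. re_inv_sq (real k) y)"

lemma has_sum_re_inv_series: "((\<lambda>k. re_inv a (real k)) has_sum re_inv_series a) UNIV"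
  unfolding re_inv_series_def
  using summable_abs_re_inv[of a] summable_sums[OF summable_rabs_cancel[OF summable_abs_re_inv]]
  by (intro norm_summable_imp_has_sum) simp_all

lemma has_sum_re_inv_sq_series: "((\<lambda>k. re_inv_sq (real k) y) has_sum re_inv_sq_series y) UNIV"
  unfolding re_inv_sq_series_def
  using summable_abs_re_inv_sq[of y] summable_sums[OF summable_rabs_cancel[OF summable_abs_re_inv_sq]]
  by (intro norm_summable_imp_has_sum) simp_all

lemma suminf_eq_of_sums_add_Suc:
  fixes g :: "nat \<Rightarrow> real"
  assumes "summable g" and "(\<lambda>k. g k + g (Suc k)) sums s"
  shows "suminf g = (s + g 0) / 2"
proof -
  have "(\<lambda>k. g k + g (Suc k)) sums (suminf g + (suminf g - g 0))"
    using sums_Suc_iff[of g "suminf g - g 0"] summable_sums[OF assms(1)]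
    by (intro sums_add) simp_all
  with assms(2) show ?thesis using sums_unique2 by fastforce
qed

lemma re_inv_series_0: "re_inv_series 0 = 0"
  by (simp add: re_inv_series_def re_inv_def)

lemma re_inv_series_eq:
  assumes "a > 0"
  shows "re_inv_series a = (pi * cosh (pi * a) / sinh (pi * a) + 1 / a) / 2"
  unfolding re_inv_series_def
  using suminf_eq_of_sums_add_Suc[OF _ coth_partial_fractions[OF assms]]
        summable_rabs_cancel[OF summable_abs_re_inv[of a]] assms
  by (simp add: re_inv_def power2_eq_square)

lemma re_inv_sq_0_right: "re_inv_sq x 0 = 1 / x\<^sup>2"
  by (cases "x = 0") (simp_all add: re_inv_sq_def power2_eq_square)

lemma re_inv_sq_series_0: "re_inv_sq_series 0 = pi\<^sup>2 / 6"
proof -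
  have "(\<lambda>k. re_inv_sq (real (Suc k)) 0) sums (pi\<^sup>2 / 6)"
    using inverse_squares_sums by (simp add: re_inv_sq_0_right add.commute)
  then have "(\<lambda>k. re_inv_sq (real k) 0) sums (pi\<^sup>2 / 6)"
    using sums_Suc_iff[of "\<lambda>k. re_inv_sq (real k) 0"] by (simp add: re_inv_sq_0_right)
  then show ?thesis
    unfolding re_inv_sq_series_def by (rule sums_unique[symmetric])
qed

lemma re_inv_sq_series_eq:
  assumes "y > 0"
  shows "re_inv_sq_series y = - (pi\<^sup>2 / (sinh (pi * y))\<^sup>2 + 1 / y\<^sup>2) / 2"
  unfolding re_inv_sq_series_def
  using suminf_eq_of_sums_add_Suc[OF _ csch_sq_partial_fractions[OF assms]]
        summable_rabs_cancel[OF summable_abs_re_inv_sq[of y]] assms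
  by (simp add: re_inv_sq_def power2_eq_square)

lemma cosh_div_sinh_le:
  fixes x :: real
  assumes "x > 0"
  shows "cosh x / sinh x \<le> 1 + 1 / x"
proof -
  have "exp (-x) * (1 + 2 * x) \<le> exp (-x) * exp (2 * x)"
    using exp_ge_add_one_self[of "2 * x"] by (intro mult_left_mono) auto
  then have "x * exp (-x) \<le> sinh x"
    by (simp add: sinh_field_def algebra_simps flip: exp_add)
  then have "exp (-x) / sinh x \<le> 1 / x"
    using assms by (simp add: field_simps)
  moreover have "cosh x = sinh x + exp (-x)"
    using cosh_minus_sinh[of x] by simp
  ultimately show ?thesis
    using assms by (simp add: add_divide_distrib)
qed

lemma re_inv_series_le:
  assumes "a > 0"
  shows "re_inv_series a \<le> pi / 2 + 1 / a"
proof -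
  have "pi * (cosh (pi * a) / sinh (pi * a)) \<le> pi * (1 + 1 / (pi * a))"
    using assms by (intro mult_left_mono cosh_div_sinh_le) auto
  also have "\<dots> = pi + 1 / a"
    by (simp add: field_simps)
  finally show ?thesis
    using assms by (simp add: re_inv_series_eq)
qed

lemma re_inv_series_tendsto: "(re_inv_series \<longlongrightarrow> pi / 2) at_top"
proof -
  have "((\<lambda>a. (pi * cosh (pi * a) / sinh (pi * a) + 1 / a) / 2) \<longlongrightarrow> pi / 2) at_top"
    unfolding sinh_field_def cosh_field_def by real_asymp
  then show ?thesis
    by (rule Lim_transform_eventually)
       (auto simp: re_inv_series_eq eventually_at_top_dense intro!: exI[of _ 0])
qed

section \<open>The double series over the lattice n + i m t\<close>

lemma summable_on_dominated_by_rows: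
  fixes f g :: "'a \<times> 'b \<Rightarrow> real"
  assumes "\<And>x. \<bar>f x\<bar> \<le> g x"
    and "\<And>a. ((\<lambda>b. g (a, b)) has_sum h a) UNIV" and "h summable_on UNIV"
  shows "f summable_on UNIV"
proof -
  have "g summable_on UNIV \<times> UNIV"
    using assms(1) abs_ge_zero order_trans
    by (intro summable_on_SigmaI[OF assms(2,3)]) blast
  then have "g summable_on UNIV" by (simp only: UNIV_Times_UNIV)
  then have "(\<lambda>x. norm (f x)) summable_on UNIV"
    by (rule Infinite_Sum.abs_summable_on_comparison_test') (use assms(1) in auto)
  then show ?thesis by (rule summable_on_iff_abs_summable_on_real[THEN iffD2])
qed

lemma has_sum_rows_and_columns:
  fixes f :: "'a \<times> 'b \<Rightarrow> real"
  assumes "f summable_on UNIV"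
    and "\<And>a. ((\<lambda>b. f (a, b)) has_sum r a) UNIV" and "\<And>b. ((\<lambda>a. f (a, b)) has_sum c b) UNIV"
  shows "(r has_sum infsum f UNIV) UNIV" and "(c has_sum infsum f UNIV) UNIV"
proof -
  have f: "(f has_sum infsum f UNIV) (UNIV \<times> UNIV)"
    using has_sum_infsum[OF assms(1)] by simp
  show "(r has_sum infsum f UNIV) UNIV"
    by (rule has_sum_Sigma'[OF f assms(2)])
  have "((\<lambda>(b, a). f (a, b)) has_sum infsum f UNIV) (UNIV \<times> UNIV)"
    using has_sum_swap[THEN iffD1, OF f] .
  then show "(c has_sum infsum f UNIV) UNIV"
    by (rule has_sum_Sigma') (simp add: assms(3))
qed

lemma re_inv_0_right: "re_inv x 0 = 1 / x"
  by (cases "x = 0") (simp_all add: re_inv_def power2_eq_square)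

text \<open>For w = n + i m t this is Re (1 / (w^2 (w + 1))): the correction - 1/w + 1/(w + 1)
  telescopes to zero along every row but makes the double series absolutely convergent.\<close>

definition lattice_term :: "real \<Rightarrow> nat \<Rightarrow> nat \<Rightarrow> real" where
  "lattice_term t m n = re_inv_sq (real n) (real m * t)
     - re_inv (real n) (real m * t) + re_inv (real (Suc n)) (real m * t)"

definition lattice_bound :: "real \<Rightarrow> nat \<Rightarrow> nat \<Rightarrow> real" where
  "lattice_bound t m n =
     (if m = 0 then 4 / (real n + 1)\<^sup>2 else re_inv (real m * t) (real n) / (real m * t)\<^sup>2)"

lemma abs_lattice_term_le:
  assumes "t > 0"
  shows "\<bar>lattice_term t m n\<bar> \<le> lattice_bound t m n"
proof (cases "m = 0")
  case True
  show ?thesis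
  proof (cases "n = 0")
    case False
    then have "lattice_term t m n = 1 / (real n)\<^sup>2 - 1 / real n + 1 / (real n + 1)"
      using True by (simp add: lattice_term_def re_inv_0_right re_inv_sq_0_right)
    also have "\<dots> = 1 / ((real n)\<^sup>2 * (real n + 1))"
      using False by (simp add: field_simps power2_eq_square)
    finally have "lattice_term t m n = 1 / ((real n)\<^sup>2 * (real n + 1))" .
    moreover have "1 / ((real n)\<^sup>2 * (real n + 1)) \<le> 4 / (real n + 1)\<^sup>2"
    proof -
      have "(real n + 1)\<^sup>2 \<le> (2 * real n)\<^sup>2"
        using False by (intro power_mono) auto
      also have "\<dots> \<le> 4 * ((real n)\<^sup>2 * (real n + 1))"
        using mult_left_mono[of 1 "real n + 1" "4 * (real n)\<^sup>2"] by (simp add: power_mult_distrib)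
      finally show ?thesis
        using False by (simp add: divide_simps)
    qed
    ultimately show ?thesis
      using True by (simp add: lattice_bound_def add.commute)
  qed (simp add: True lattice_term_def lattice_bound_def re_inv_def re_inv_sq_def)
next
  case False
  define y where "y = real m * t"
  define w where "w = Complex (real n) y"
  have "y > 0" using False assms by (simp add: y_def)
  then have "w \<noteq> 0" "w + 1 \<noteq> 0" by (auto simp: w_def complex_eq_iff)
  have "w + 1 = Complex (real (Suc n)) y"
    by (simp add: w_def complex_eq_iff)
  then have "lattice_term t m n = Re (inverse (w\<^sup>2) - inverse w + inverse (w + 1))"
    by (simp only: lattice_term_def w_def y_def Re_inverse_Complex Re_inverse_Complex_sq
                   minus_complex.sel plus_complex.sel)
  also have "inverse (w\<^sup>2) - inverse w + inverse (w + 1) = inverse (w\<^sup>2 * (w + 1))"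
    using \<open>w \<noteq> 0\<close> \<open>w + 1 \<noteq> 0\<close> by (simp add: field_simps power2_eq_square)
  finally have "\<bar>lattice_term t m n\<bar> \<le> 1 / (cmod w ^ 2 * cmod (w + 1))"
    using abs_Re_le_cmod[of "inverse (w\<^sup>2 * (w + 1))"]
    by (simp add: norm_inverse norm_mult norm_power divide_inverse)
  also have "\<dots> \<le> 1 / (((real n)\<^sup>2 + y\<^sup>2) * y)"
    using \<open>y > 0\<close> abs_Im_le_cmod[of "w + 1"]
    by (intro divide_left_mono mult_mono) (auto simp: w_def cmod_power2 intro!: mult_pos_pos add_nonneg_pos)
  also have "\<dots> = re_inv y (real n) / y\<^sup>2"
  proof -
    have "1 / (X * y) = y / X / y\<^sup>2" for X
      using \<open>y > 0\<close> by (simp add: power2_eq_square)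
    then show ?thesis by (simp add: re_inv_def add.commute)
  qed
  also have "\<dots> = lattice_bound t m n"
    using False by (simp add: lattice_bound_def y_def)
  finally show ?thesis .
qed

lemma re_inv_tendsto_0: "(\<lambda>n. re_inv (real n) y) \<longlonglongrightarrow> 0"
  unfolding re_inv_def by real_asymp

lemma re_inv_series_nonneg: "a \<ge> 0 \<Longrightarrow> re_inv_series a \<ge> 0"
  by (rule has_sum_nonneg[OF has_sum_re_inv_series]) (simp add: re_inv_def)

definition lattice_bound_row :: "real \<Rightarrow> nat \<Rightarrow> real" where
  "lattice_bound_row t m = (if m = 0 then 2 * pi\<^sup>2 / 3 else re_inv_series (real m * t) / (real m * t)\<^sup>2)"

lemma has_sum_lattice_bound_row:
  assumes "t > 0"
  shows "((\<lambda>n. lattice_bound t m n) has_sum lattice_bound_row t m) UNIV"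
proof (cases "m = 0")
  case True
  have "lattice_bound t m = (\<lambda>n. 4 * (1 / (real n + 1)\<^sup>2))"
    using True by (simp add: lattice_bound_def fun_eq_iff)
  moreover have "(\<lambda>n. 4 * (1 / (real n + 1)\<^sup>2)) sums (4 * (pi\<^sup>2 / 6))"
    using sums_mult[OF inverse_squares_sums[unfolded of_nat_power of_nat_add of_nat_1]] .
  ultimately show ?thesis
    using True by (intro sums_nonneg_imp_has_sum) (simp_all add: lattice_bound_row_def)
next
  case False
  then show ?thesis
    by (simp add: lattice_bound_def lattice_bound_row_def has_sum_divide_const has_sum_re_inv_series)
qed

lemma summable_lattice_bound_row:
  assumes "t > 0"
  shows "summable (\<lambda>m. \<bar>lattice_bound_row t m\<bar>)"
proof (rule summable_abs_of_le_inverse_sq[where c = "(pi / 2 + 1 / t) / t\<^sup>2"])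
  fix m :: nat
  assume "m \<ge> 1"
  define a where "a = real m * t"
  have "a \<ge> t" using \<open>m \<ge> 1\<close> assms by (simp add: a_def)
  then have "a > 0" using assms by linarith
  have "\<bar>lattice_bound_row t m\<bar> = re_inv_series a / a\<^sup>2"
    using \<open>m \<ge> 1\<close> \<open>a > 0\<close> re_inv_series_nonneg[of a] by (simp add: lattice_bound_row_def a_def)
  also have "\<dots> \<le> (pi / 2 + 1 / t) / a\<^sup>2"
  proof -
    have "1 / a \<le> 1 / t"
      using \<open>a \<ge> t\<close> assms by (intro divide_left_mono) auto
    then show ?thesis
      using re_inv_series_le[OF \<open>a > 0\<close>] by (intro divide_right_mono) auto
  qed
  also have "\<dots> = (pi / 2 + 1 / t) / t\<^sup>2 / (real m)\<^sup>2"
    by (simp add: a_def power_mult_distrib)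
  finally show "\<bar>lattice_bound_row t m\<bar> \<le> (pi / 2 + 1 / t) / t\<^sup>2 / (real m)\<^sup>2" .
qed

lemma summable_on_lattice_term:
  assumes "t > 0"
  shows "(\<lambda>(m, n). lattice_term t m n) summable_on UNIV"
proof (rule summable_on_dominated_by_rows)
  show "\<bar>(\<lambda>(m, n). lattice_term t m n) x\<bar> \<le> (\<lambda>(m, n). lattice_bound t m n) x" for x
    using abs_lattice_term_le[OF assms] by (cases x) simp
  show "((\<lambda>n. (\<lambda>(m, n). lattice_bound t m n) (m, n)) has_sum lattice_bound_row t m) UNIV" for m
    using has_sum_lattice_bound_row[OF assms] by simp
  show "lattice_bound_row t summable_on UNIV"
    using norm_summable_imp_has_sum[OF _ summable_sums[OF summable_rabs_cancel]]
          summable_lattice_bound_row[OF assms]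
    by (auto intro: has_sum_imp_summable)
qed

lemma has_sum_lattice_term_row:
  assumes "t > 0"
  shows "((\<lambda>n. lattice_term t m n) has_sum re_inv_sq_series (real m * t)) UNIV"
proof (rule norm_summable_imp_has_sum)
  show "summable (\<lambda>n. norm (lattice_term t m n))"
    using abs_lattice_term_le[OF assms]
    by (intro summable_comparison_test'[OF sums_summable[OF has_sum_imp_sums[OF has_sum_lattice_bound_row[OF assms]]]])
       simp
  have "(\<lambda>n. re_inv (real (Suc n)) (real m * t) - re_inv (real n) (real m * t)) sums (0 - 0)"
    using telescope_sums[OF re_inv_tendsto_0] by (simp add: re_inv_def)
  from sums_add[OF summable_sums[OF summable_rabs_cancel[OF summable_abs_re_inv_sq]] this]
  show "(\<lambda>n. lattice_term t m n) sums re_inv_sq_series (real m * t)"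
    by (simp add: lattice_term_def re_inv_sq_series_def algebra_simps)
qed

lemma lattice_term_column_form:
  assumes "t > 0"
  shows "lattice_term t m n = (re_inv (real (Suc n) / t) (real m) - re_inv (real n / t) (real m)) / t
           - re_inv_sq (real m) (real n / t) / t\<^sup>2"
proof -
  have "re_inv x (real m * t) = re_inv (x / t) (real m) / t"
       "re_inv_sq x (real m * t) = - re_inv_sq (real m) (x / t) / t\<^sup>2" for x
    using re_inv_scale[of t "x / t" "real m"] re_inv_sq_scale[of t "x / t" "real m"] assms
    by (simp_all add: mult.commute re_inv_sq_swap[of "x / t"])
  then show ?thesis
    by (simp add: lattice_term_def diff_divide_distrib)
qed

lemma has_sum_lattice_term_column:
  assumes "t > 0"
  shows "((\<lambda>m. lattice_term t m n) has_sum
           (re_inv_series (real (Suc n) / t) - re_inv_series (real n / t)) / t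
           - re_inv_sq_series (real n / t) / t\<^sup>2) UNIV"
  unfolding lattice_term_column_form[OF assms] diff_conv_add_uminus
  by (intro has_sum_add has_sum_divide_const has_sum_uminusI has_sum_re_inv_series has_sum_re_inv_sq_series)

lemma re_inv_sq_series_reciprocity:
  assumes "t > 0"
  shows "summable (\<lambda>m. re_inv_sq_series (real m * t))"
    and "(\<Sum>m. re_inv_sq_series (real m * t)) + (\<Sum>n. re_inv_sq_series (real n / t)) / t\<^sup>2 = pi / (2 * t)"
proof -
  define T where "T = infsum (\<lambda>(m, n). lattice_term t m n) UNIV"
  define col where "col n = (re_inv_series (real (Suc n) / t) - re_inv_series (real n / t)) / t
                     - re_inv_sq_series (real n / t) / t\<^sup>2" for n
  note double_sum = has_sum_rows_and_columns[OF summable_on_lattice_term[OF assms],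
      of "\<lambda>m. re_inv_sq_series (real m * t)" col, folded T_def]
  have rows: "(\<lambda>m. re_inv_sq_series (real m * t)) sums T"
    and cols: "col sums T"
    using double_sum has_sum_lattice_term_row[OF assms] has_sum_lattice_term_column[OF assms]
    by (simp_all add: col_def has_sum_imp_sums)
  from rows show "summable (\<lambda>m. re_inv_sq_series (real m * t))"
    by (rule sums_summable)
  have "filterlim (\<lambda>n. real n / t) at_top sequentially"
    using assms by real_asymp
  then have "(\<lambda>n. re_inv_series (real n / t)) \<longlonglongrightarrow> pi / 2"
    by (rule filterlim_compose[OF re_inv_series_tendsto])
  from telescope_sums[OF this]
  have "(\<lambda>n. (re_inv_series (real (Suc n) / t) - re_inv_series (real n / t)) / t) sums (pi / 2 / t)"
    by (intro sums_divide) (simp add: re_inv_series_0)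
  from sums_diff[OF this cols[unfolded col_def]]
  have "(\<lambda>n. re_inv_sq_series (real n / t) / t\<^sup>2) sums (pi / 2 / t - T)"
    by simp
  from sums_mult2[OF this, of "t\<^sup>2"]
  have "(\<lambda>n. re_inv_sq_series (real n / t)) sums ((pi / 2 / t - T) * t\<^sup>2)"
    using assms by simp
  then show "(\<Sum>m. re_inv_sq_series (real m * t)) + (\<Sum>n. re_inv_sq_series (real n / t)) / t\<^sup>2 = pi / (2 * t)"
    using sums_unique[OF rows] sums_unique assms by (fastforce simp: field_simps)
qed

definition csch_sq_sum :: "real \<Rightarrow> real" where
  "csch_sq_sum t = (\<Sum>m. 1 / (sinh (pi * real (Suc m) * t))\<^sup>2)"

lemma csch_sq_sum_eq:
  assumes "t > 0"
  shows "csch_sq_sum t = (pi\<^sup>2 / 3 - pi\<^sup>2 / (6 * t\<^sup>2) - 2 * (\<Sum>m. re_inv_sq_series (real m * t))) / pi\<^sup>2"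
proof -
  define S where "S = (\<Sum>m. re_inv_sq_series (real m * t))"
  have "(\<lambda>m. re_inv_sq_series (real m * t)) sums S"
    using re_inv_sq_series_reciprocity(1)[OF assms] by (simp add: S_def summable_sums)
  then have rows: "(\<lambda>m. re_inv_sq_series (real (Suc m) * t)) sums (S - pi\<^sup>2 / 6)"
    using sums_Suc_iff[of "\<lambda>m. re_inv_sq_series (real m * t)" "S - pi\<^sup>2 / 6"]
    by (simp add: re_inv_sq_series_0)
  have squares: "(\<lambda>m. 1 / (real (Suc m))\<^sup>2 / t\<^sup>2) sums (pi\<^sup>2 / 6 / t\<^sup>2)"
    using sums_divide[OF inverse_squares_sums[unfolded of_nat_power], of "t\<^sup>2"] by simp
  have "(\<lambda>m. (- 2 * re_inv_sq_series (real (Suc m) * t) - 1 / (real (Suc m))\<^sup>2 / t\<^sup>2) / pi\<^sup>2)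
      sums ((- 2 * (S - pi\<^sup>2 / 6) - pi\<^sup>2 / 6 / t\<^sup>2) / pi\<^sup>2)"
    by (rule sums_divide[OF sums_diff[OF sums_mult[OF rows] squares]])
  moreover have "(- 2 * re_inv_sq_series (real (Suc m) * t) - 1 / (real (Suc m))\<^sup>2 / t\<^sup>2) / pi\<^sup>2
      = 1 / (sinh (pi * real (Suc m) * t))\<^sup>2" for m
  proof -
    have "real (Suc m) * t > 0" using assms by simp
    moreover have "((2 / X + 2 * pi\<^sup>2 / S) / 2 - 1 / X) / pi\<^sup>2 = 1 / S" for X S :: real
      by (simp add: add_divide_distrib)
    ultimately show ?thesis
      unfolding re_inv_sq_series_eq[OF \<open>real (Suc m) * t > 0\<close>]
      by (simp add: power_mult_distrib mult.assoc)
  qed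
  ultimately show ?thesis
    unfolding csch_sq_sum_def S_def[symmetric] by (simp add: sums_unique[symmetric] field_simps)
qed

lemma csch_sq_sum_reciprocity:
  assumes "t > 0"
  shows "csch_sq_sum t + csch_sq_sum (1 / t) / t\<^sup>2 = 1 / 6 + 1 / (6 * t\<^sup>2) - 1 / (pi * t)"
proof -
  define A where "A = (\<Sum>m. re_inv_sq_series (real m * t))"
  define B where "B = (\<Sum>m. re_inv_sq_series (real m / t))"
  have "A + B / t\<^sup>2 = pi / (2 * t)"
    using re_inv_sq_series_reciprocity(2)[OF assms] by (simp add: A_def B_def)
  then have B: "B = t\<^sup>2 * (pi / (2 * t) - A)"
    using assms by (simp add: field_simps)
  have csch_t: "csch_sq_sum t = (pi\<^sup>2 / 3 - pi\<^sup>2 / (6 * t\<^sup>2) - 2 * A) / pi\<^sup>2"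
    and csch_inv_t: "csch_sq_sum (1 / t) = (pi\<^sup>2 / 3 - pi\<^sup>2 * t\<^sup>2 / 6 - 2 * B) / pi\<^sup>2"
    using csch_sq_sum_eq[OF assms] csch_sq_sum_eq[of "1 / t"] assms
    by (simp_all add: A_def B_def power_one_over)
  show ?thesis
    unfolding csch_t csch_inv_t B using assms by (simp add: field_simps power2_eq_square)
qed

section \<open>Lambert series\<close>

lemma power_Suc_le_self:
  fixes x :: real
  assumes "0 \<le> x" "x < 1"
  shows "x ^ Suc k \<le> x" and "x ^ Suc k < 1"
  using assms power_le_one[of x k] by (simp_all add: mult_left_le le_less_trans[OF mult_left_le])

lemma summable_lambert_series:
  fixes x :: real
  assumes "0 \<le> x" "x < 1"
  shows "summable (\<lambda>r. real (Suc r) * x ^ Suc r / (1 - x ^ Suc r))"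
proof (rule summable_comparison_test')
  show "summable (\<lambda>r. x / (1 - x) * (real (Suc r) * x ^ r))"
    using geometric_deriv_sums[of x] assms by (intro summable_mult sums_summable) auto
  fix r :: nat
  have "norm (real (Suc r) * x ^ Suc r / (1 - x ^ Suc r)) = real (Suc r) * x ^ Suc r / (1 - x ^ Suc r)"
    using power_Suc_le_self[OF assms, of r] assms by simp
  also have "\<dots> \<le> real (Suc r) * x ^ Suc r / (1 - x)"
    using power_Suc_le_self[OF assms] assms by (intro divide_left_mono) auto
  also have "\<dots> = x / (1 - x) * (real (Suc r) * x ^ r)"
    by simp
  finally show "norm (real (Suc r) * x ^ Suc r / (1 - x ^ Suc r)) \<le> x / (1 - x) * (real (Suc r) * x ^ r)" .
qed

lemma lambert_series:
  fixes x :: real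
  assumes "0 \<le> x" "x < 1"
  shows "summable (\<lambda>m. x ^ Suc m / (1 - x ^ Suc m)\<^sup>2)"
    and "(\<lambda>r. real (Suc r) * x ^ Suc r / (1 - x ^ Suc r)) sums (\<Sum>m. x ^ Suc m / (1 - x ^ Suc m)\<^sup>2)"
proof -
  define h where "h = (\<lambda>(r, m). real (Suc r) * x ^ (Suc r * Suc m))"
  have norm_pow: "norm (x ^ Suc k) < 1" for k
    using power_Suc_le_self[OF assms] assms by simp
  have row: "((\<lambda>m. h (r, m)) has_sum real (Suc r) * x ^ Suc r / (1 - x ^ Suc r)) UNIV" for r
  proof (rule sums_nonneg_imp_has_sum)
    have "(\<lambda>m. real (Suc r) * x ^ Suc r * (x ^ Suc r) ^ m) sums (real (Suc r) * x ^ Suc r * (1 / (1 - x ^ Suc r)))"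
      using norm_pow by (intro sums_mult geometric_sums)
    moreover have "h (r, m) = real (Suc r) * x ^ Suc r * (x ^ Suc r) ^ m" for m
      unfolding h_def by (simp only: case_prod_conv power_mult power_Suc[of "x ^ Suc r"] mult.assoc)
    ultimately show "(\<lambda>m. h (r, m)) sums (real (Suc r) * x ^ Suc r / (1 - x ^ Suc r))"
      by simp
  qed (simp add: h_def assms)
  have column: "((\<lambda>r. h (r, m)) has_sum x ^ Suc m / (1 - x ^ Suc m)\<^sup>2) UNIV" for m
  proof (rule sums_nonneg_imp_has_sum)
    have "(\<lambda>r. x ^ Suc m * (real (Suc r) * (x ^ Suc m) ^ r)) sums (x ^ Suc m * (1 / (1 - x ^ Suc m)\<^sup>2))"
      using norm_pow by (intro sums_mult geometric_deriv_sums)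
    moreover have "h (r, m) = x ^ Suc m * (real (Suc r) * (x ^ Suc m) ^ r)" for r
    proof -
      have "x ^ (Suc r * Suc m) = x ^ Suc m * (x ^ Suc m) ^ r"
        by (metis mult.commute power_mult power_Suc)
      then show ?thesis by (simp only: h_def case_prod_conv mult_ac)
    qed
    ultimately show "(\<lambda>r. h (r, m)) sums (x ^ Suc m / (1 - x ^ Suc m)\<^sup>2)"
      by simp
  qed (simp add: h_def assms)
  have "real (Suc r) * x ^ Suc r / (1 - x ^ Suc r) \<ge> 0" for r
    using power_Suc_le_self[OF assms, of r] assms by simp
  then have "(\<lambda>r. real (Suc r) * x ^ Suc r / (1 - x ^ Suc r)) summable_on UNIV"
    using summable_lambert_series[OF assms] by (simp add: summable_on_UNIV_nonneg_real_iff)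
  moreover have "h p \<ge> 0" for p
    using assms by (cases p) (simp add: h_def)
  ultimately have "h summable_on UNIV"
    using summable_on_SigmaI[where A = UNIV and B = "\<lambda>_. UNIV" and f = h, OF row] by simp
  have "((\<lambda>r. real (Suc r) * x ^ Suc r / (1 - x ^ Suc r)) has_sum infsum h UNIV) UNIV"
    and "((\<lambda>m. x ^ Suc m / (1 - x ^ Suc m)\<^sup>2) has_sum infsum h UNIV) UNIV"
    using has_sum_rows_and_columns[OF \<open>h summable_on UNIV\<close> row column] by simp_all
  then show "summable (\<lambda>m. x ^ Suc m / (1 - x ^ Suc m)\<^sup>2)"
    and "(\<lambda>r. real (Suc r) * x ^ Suc r / (1 - x ^ Suc r)) sums (\<Sum>m. x ^ Suc m / (1 - x ^ Suc m)\<^sup>2)"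
    by (auto dest!: has_sum_imp_sums simp: sums_iff)
qed

lemma inverse_sinh_sq_eq:
  fixes u :: real
  assumes "u > 0"
  shows "inverse (exp (2 * u)) / (1 - inverse (exp (2 * u)))\<^sup>2 = 1 / (sinh u)\<^sup>2 / 4"
proof -
  define E where "E = exp u"
  have "E > 1" using assms by (simp add: E_def)
  then have "E\<^sup>2 > 1" by (simp add: one_less_power)
  then have "E\<^sup>2 - 1 \<noteq> 0" by simp
  have "exp (2 * u) = E\<^sup>2" "sinh u = (E\<^sup>2 - 1) / (2 * E)"
    using \<open>E > 1\<close> by (simp_all add: E_def sinh_field_def exp_minus power2_eq_square field_simps flip: exp_add)
  moreover have "inverse Y / (1 - inverse Y)\<^sup>2 = Y / (Y - 1)\<^sup>2" if "Y - 1 \<noteq> 0" for Y :: real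
    using that by (cases "Y = 0") (simp_all add: field_simps power2_eq_square)
  moreover have "1 / ((E\<^sup>2 - 1) / (2 * E))\<^sup>2 / 4 = E\<^sup>2 / (E\<^sup>2 - 1)\<^sup>2"
    using \<open>E > 1\<close> by (simp add: power_divide power_mult_distrib)
  ultimately show ?thesis
    using \<open>E\<^sup>2 - 1 \<noteq> 0\<close> by simp
qed

lemma lambert_series_csch_sq:
  assumes "t > 0"
  shows "(\<lambda>r. real (Suc r) / (exp (2 * pi * real (Suc r) * t) - 1)) sums (csch_sq_sum t / 4)"
proof -
  define x where "x = inverse (exp (2 * pi * t))"
  have "exp (2 * pi * t) > 1" using assms by simp
  then have x: "0 \<le> x" "x < 1" by (simp_all add: x_def inverse_less_1_iff)
  have pow: "x ^ k = inverse (exp (2 * (pi * real k * t)))" for k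
    by (simp add: x_def power_inverse mult_ac flip: exp_of_nat_mult)
  have "real (Suc r) * x ^ Suc r / (1 - x ^ Suc r) = real (Suc r) / (exp (2 * pi * real (Suc r) * t) - 1)" for r
  proof -
    have geometric: "c * inverse E / (1 - inverse E) = c / (E - 1)" if "E > 1" for c E :: real
      using that by (simp add: field_simps)
    have "exp (2 * (pi * real (Suc r) * t)) > 1" using assms by simp
    then show ?thesis
      unfolding pow geometric[OF \<open>exp (2 * (pi * real (Suc r) * t)) > 1\<close>] by (simp add: mult_ac)
  qed
  moreover have "x ^ Suc m / (1 - x ^ Suc m)\<^sup>2 = 1 / (sinh (pi * real (Suc m) * t))\<^sup>2 / 4" for m
    unfolding pow using assms by (intro inverse_sinh_sq_eq) simp
  ultimately have summable: "summable (\<lambda>m. 1 / (sinh (pi * real (Suc m) * t))\<^sup>2 / 4)"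
    and lambert: "(\<lambda>r. real (Suc r) / (exp (2 * pi * real (Suc r) * t) - 1))
                    sums (\<Sum>m. 1 / (sinh (pi * real (Suc m) * t))\<^sup>2 / 4)"
    using lambert_series[OF x] by simp_all
  have "(\<Sum>m. 1 / (sinh (pi * real (Suc m) * t))\<^sup>2 / 4) = csch_sq_sum t / 4"
    unfolding csch_sq_sum_def using summable_mult[OF summable, of 4] by (intro suminf_divide) simp
  with lambert show ?thesis by (simp only:)
qed

lemma exp_div_exp_double_minus_one:
  fixes u :: real
  assumes "u > 0"
  shows "c * exp u / (exp (2 * u) - 1) = c / (exp u - 1) - c / (exp (2 * u) - 1)"
proof -
  define E where "E = exp u"
  have "E > 1" using assms by (simp add: E_def)
  then have "E\<^sup>2 > 1" by (simp add: one_less_power)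
  have "exp (2 * u) = E\<^sup>2" by (simp add: E_def power2_eq_square flip: exp_add)
  moreover have "c / (E - 1) = c * (E + 1) / (E\<^sup>2 - 1)"
    using \<open>E > 1\<close> \<open>E\<^sup>2 > 1\<close> by (simp add: field_simps power2_eq_square)
  ultimately show ?thesis
    by (simp add: E_def[symmetric] algebra_simps flip: diff_divide_distrib)
qed

lemma sums_alternating_Suc:
  fixes f :: "nat \<Rightarrow> real"
  assumes "(\<lambda>n. f (Suc n)) sums S" and "(\<lambda>n. f (2 * Suc n)) sums S'"
  shows "(\<lambda>n. (-1) ^ Suc n * f (Suc n)) sums (2 * S' - S)"
proof -
  define d where "d n = (1 + (-1) ^ Suc n) * f (Suc n)" for n
  have "(\<lambda>k. d (2 * k + 1)) sums (2 * S')"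
    using sums_mult[OF assms(2), of 2] by (simp add: d_def)
  moreover have "d n = 0" if "n \<notin> range (\<lambda>k. 2 * k + 1)" for n
  proof -
    have "even n" using that by (metis odd_two_times_div_two_succ rangeI)
    then show ?thesis by (simp add: d_def)
  qed
  ultimately have "d sums (2 * S')"
    using sums_mono_reindex[of "\<lambda>k. 2 * k + 1" d] by (simp add: strict_mono_def)
  from sums_diff[OF this assms(1)] show ?thesis
    by (simp add: d_def algebra_simps)
qed

theorem corollary1p18:
  shows "(\<Sum>n. real (Suc n) * exp (real (Suc n) * pi) / (exp (2 * pi * real (Suc n)) - 1))
       + (\<Sum>n. real (Suc n) * (-1) ^ (Suc n) / (exp (2 * pi * real (Suc n)) - 1))
       = 1/8 - 1 / (4 * pi)"
proof -
  define f where "f n = real n / (exp (2 * pi * real n) - 1)" for n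
  have half: "2 * pi * real (Suc n) * (1 / 2) = real (Suc n) * pi" for n
    by simp
  have L: "(\<lambda>n. f (Suc n)) sums (csch_sq_sum 1 / 4)"
    and L_half: "(\<lambda>n. real (Suc n) / (exp (real (Suc n) * pi) - 1)) sums (csch_sq_sum (1 / 2) / 4)"
    and L_double: "(\<lambda>n. f (2 * Suc n)) sums (2 * (csch_sq_sum 2 / 4))"
    using lambert_series_csch_sq[of 1] lambert_series_csch_sq[of "1 / 2", unfolded half]
          sums_mult[OF lambert_series_csch_sq[of 2], of 2]
    by (simp_all add: f_def mult_ac)
  have "real (Suc n) * exp (real (Suc n) * pi) / (exp (2 * pi * real (Suc n)) - 1)
      = real (Suc n) / (exp (real (Suc n) * pi) - 1) - f (Suc n)" for n
    using exp_div_exp_double_minus_one[of "real (Suc n) * pi" "real (Suc n)"]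
    by (simp add: f_def mult_ac)
  then have first: "(\<Sum>n. real (Suc n) * exp (real (Suc n) * pi) / (exp (2 * pi * real (Suc n)) - 1))
      = csch_sq_sum (1 / 2) / 4 - csch_sq_sum 1 / 4"
    using sums_unique[OF sums_diff[OF L_half L], symmetric] by simp
  have second: "(\<Sum>n. real (Suc n) * (-1) ^ Suc n / (exp (2 * pi * real (Suc n)) - 1))
      = csch_sq_sum 2 - csch_sq_sum 1 / 4"
    using sums_unique[OF sums_alternating_Suc[OF L L_double], symmetric] by (simp add: f_def mult_ac)
  have at_1: "csch_sq_sum 1 = 1 / 6 - 1 / (2 * pi)"
    using csch_sq_sum_reciprocity[of 1] by simp
  have at_half: "csch_sq_sum (1 / 2) = 4 * (5 / 24 - 1 / (2 * pi) - csch_sq_sum 2)"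
    using csch_sq_sum_reciprocity[of 2] by simp
  show ?thesis
    unfolding first second at_1 at_half by (simp add: field_simps)
qed

end
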